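(* Let $R$ be a unital ring and let $S\subseteq R$ be a subset with $0,1\in S$ such that $S$ is an inverse monoid under the multiplication of $R$. Then there is a subset $T$ with $S\subseteq T\subseteq R$ such that $T$, under the multiplication of $R$, is a Boolean inverse monoid.
   Context: An inverse monoid is a monoid in which each $s$ has a unique $s^{-1}$ with $s=ss^{-1}s$, $s^{-1}=s^{-1}ss^{-1}$; natural partial order $s\le t$ iff $s=ts^{-1}s$; $a,b$ compatible if $a^{-1}b,ab^{-1}$ are idempotents. A Boolean inverse monoid is an inverse monoid with zero in which every finite compatible subset has a join with respect to $\le$, multiplication distributes over such joins, and the idempotents form a Boolean algebra. *)

theory Defs
  imports Main
begin

definition is_inverse_monoid :: "'a::monoid_mult set \<Rightarrow> bool" where
  "is_inverse_monoid T \<longleftrightarrow>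
     1 \<in> T \<and> (\<forall>x\<in>T. \<forall>y\<in>T. x * y \<in> T) \<and>
     (\<forall>s\<in>T. \<exists>!t. t \<in> T \<and> s = s * t * s \<and> t = t * s * t)"

definition inv_in :: "'a::monoid_mult set \<Rightarrow> 'a \<Rightarrow> 'a" where
  "inv_in T s = (THE t. t \<in> T \<and> s = s * t * s \<and> t = t * s * t)"

definition nat_le :: "'a::monoid_mult set \<Rightarrow> 'a \<Rightarrow> 'a \<Rightarrow> bool" where
  "nat_le T s t \<longleftrightarrow> s = t * inv_in T s * s"

definition idem :: "'a::monoid_mult \<Rightarrow> bool" where
  "idem e \<longleftrightarrow> e * e = e"

definition compatible :: "'a::monoid_mult set \<Rightarrow> 'a \<Rightarrow> 'a \<Rightarrow> bool" where
  "compatible T a b \<longleftrightarrow> idem (inv_in T a * b) \<and> idem (a * inv_in T b)"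

definition is_lub_in :: "'a::monoid_mult set \<Rightarrow> 'a set \<Rightarrow> 'a set \<Rightarrow> 'a \<Rightarrow> bool" where
  "is_lub_in T C X j \<longleftrightarrow> j \<in> C \<and> (\<forall>x\<in>X. nat_le T x j) \<and>
     (\<forall>u\<in>C. (\<forall>x\<in>X. nat_le T x u) \<longrightarrow> nat_le T j u)"

definition is_glb_in :: "'a::monoid_mult set \<Rightarrow> 'a set \<Rightarrow> 'a set \<Rightarrow> 'a \<Rightarrow> bool" where
  "is_glb_in T C X m \<longleftrightarrow> m \<in> C \<and> (\<forall>x\<in>X. nat_le T m x) \<and>
     (\<forall>u\<in>C. (\<forall>x\<in>X. nat_le T u x) \<longrightarrow> nat_le T u m)"

definition idems :: "'a::monoid_mult set \<Rightarrow> 'a set" where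
  "idems T = {e \<in> T. idem e}"

definition idems_boolean_algebra :: "'a::monoid_mult set \<Rightarrow> bool" where
  "idems_boolean_algebra T \<longleftrightarrow>
     (let E = idems T;
          J = (\<lambda>e f. THE j. is_lub_in T E {e, f} j);
          M = (\<lambda>e f. THE m. is_glb_in T E {e, f} m)
      in (\<forall>e\<in>E. \<forall>f\<in>E. (\<exists>j. is_lub_in T E {e, f} j) \<and> (\<exists>m. is_glb_in T E {e, f} m)) \<and>
         (\<forall>e\<in>E. \<forall>f\<in>E. \<forall>g\<in>E. M e (J f g) = J (M e f) (M e g)) \<and>
         (\<exists>bot\<in>E. \<exists>top\<in>E. (\<forall>e\<in>E. nat_le T bot e \<and> nat_le T e top) \<and>
            (\<forall>e\<in>E. \<exists>c\<in>E. M e c = bot \<and> J e c = top)))"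

definition is_boolean_inverse_monoid :: "'a::monoid_mult set \<Rightarrow> bool" where
  "is_boolean_inverse_monoid T \<longleftrightarrow>
     is_inverse_monoid T \<and>
     (\<exists>z\<in>T. \<forall>x\<in>T. z * x = z \<and> x * z = z) \<and>
     (\<forall>A. finite A \<and> A \<subseteq> T \<and> (\<forall>a\<in>A. \<forall>b\<in>A. compatible T a b) \<longrightarrow>
        (\<exists>j. is_lub_in T T A j) \<and>
        (\<forall>j s. is_lub_in T T A j \<and> s \<in> T \<longrightarrow>
           is_lub_in T T ((\<lambda>a. s * a) ` A) (s * j) \<and>
           is_lub_in T T ((\<lambda>a. a * s) ` A) (j * s))) \<and>
     idems_boolean_algebra T"

end

theory Submission
  imports Defs
begin

text \<open>
  The idempotents of S commute, so the subring of R they generate is commutative and its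
  idempotents form a Boolean algebra B, which S normalises: s B s^-1 \<subseteq> B. Take for T the set of
  all a having an inner inverse a' (a a' a = a and a' a a' = a') with a B a' \<subseteq> B and
  a' B a \<subseteq> B. Then T contains S and B, it is an inverse monoid whose idempotents are exactly B,
  and the sum of two elements of T with orthogonal domains and ranges lies in T again. Finite
  compatible families therefore have joins computed in the ring: if j is the join of A, then
  c + j (1 - c^-1 c) is the join of A \<union> {c}. A join is pinned down by annihilator conditions on
  its domain and range idempotents, and these survive multiplication by elements of T on either
  side, which gives distributivity.
\<close>

section \<open>Inverse submonoids\<close>

lemma idem_mult_left: "idem (e::'a::monoid_mult) \<Longrightarrow> e * (e * z) = e * z"
  unfolding idem_def by (simp flip: mult.assoc)

locale inverse_submonoid =
  fixes S :: "'a::monoid_mult set"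
  assumes inverse_monoid: "is_inverse_monoid S"
begin

lemma one_mem: "1 \<in> S"
  using inverse_monoid unfolding is_inverse_monoid_def by blast

lemma mult_mem: "x \<in> S \<Longrightarrow> y \<in> S \<Longrightarrow> x * y \<in> S"
  using inverse_monoid unfolding is_inverse_monoid_def by blast

lemma ex1_inverse: "s \<in> S \<Longrightarrow> \<exists>!t. t \<in> S \<and> s = s * t * s \<and> t = t * s * t"
  using inverse_monoid unfolding is_inverse_monoid_def by blast

lemma
  assumes "s \<in> S"
  shows inv_mem: "inv_in S s \<in> S"
    and mult_inv_mult: "s * inv_in S s * s = s"
    and inv_mult_inv: "inv_in S s * s * inv_in S s = inv_in S s"
  using theI'[OF ex1_inverse[OF assms]] unfolding inv_in_def by auto

lemma inv_eqI:
  assumes "s \<in> S" "t \<in> S" "s * t * s = s" "t * s * t = t"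
  shows "inv_in S s = t"
  using the1_equality[OF ex1_inverse[OF assms(1)]] assms unfolding inv_in_def by auto

lemma mult_inv_mult_assoc: "s \<in> S \<Longrightarrow> s * (inv_in S s * (s * z)) = s * z"
  using mult_inv_mult[of s] by (simp flip: mult.assoc)

lemma inv_mult_inv_assoc: "s \<in> S \<Longrightarrow> inv_in S s * (s * (inv_in S s * z)) = inv_in S s * z"
  using inv_mult_inv[of s] by (simp flip: mult.assoc)

lemma inv_inv: "s \<in> S \<Longrightarrow> inv_in S (inv_in S s) = s"
  using inv_eqI[OF inv_mem] mult_inv_mult inv_mult_inv by blast

lemma dom_mem: "s \<in> S \<Longrightarrow> inv_in S s * s \<in> S"
  using mult_mem inv_mem by blast

lemma ran_mem: "s \<in> S \<Longrightarrow> s * inv_in S s \<in> S"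
  using mult_mem inv_mem by blast

lemma dom_idem: "s \<in> S \<Longrightarrow> idem (inv_in S s * s)"
  unfolding idem_def using inv_mult_inv[of s] by (simp flip: mult.assoc)

lemma ran_idem: "s \<in> S \<Longrightarrow> idem (s * inv_in S s)"
  unfolding idem_def using mult_inv_mult[of s] by (simp flip: mult.assoc)

lemma idem_mult_idem:
  assumes e: "e \<in> S" "idem e" and f: "f \<in> S" "idem f"
  shows "idem (e * f)"
proof -
  define x where "x = inv_in S (e * f)"
  have ef: "e * f \<in> S" using mult_mem e f by blast
  have x: "x \<in> S" "e * f * x * (e * f) = e * f" "x * (e * f) * x = x"
    using inv_mem[OF ef] mult_inv_mult[OF ef] inv_mult_inv[OF ef] by (simp_all add: x_def)
  have x2: "e * (f * (x * (e * (f * z)))) = e * (f * z)"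
    and x3: "x * (e * (f * (x * z))) = x * z" for z
    using x(2,3) by (simp_all flip: mult.assoc)
  \<comment> \<open>f x e is again an inverse of e f, hence equals x; so x is idempotent and self-inverse\<close>
  have "f * x * e \<in> S" using mult_mem x(1) e f by blast
  moreover have "e * f * (f * x * e) * (e * f) = e * f"
    and "f * x * e * (e * f) * (f * x * e) = f * x * e"
    using x(2) x2 x3 by (simp_all add: mult.assoc idem_mult_left e f)
  ultimately have xfe: "x = f * x * e" using inv_eqI[OF ef] x_def by blast
  have "(f * x * e) * (f * x * e) = f * x * e" by (simp add: mult.assoc x3)
  then have xx: "x * x = x" by (simp only: xfe[symmetric])
  have "x = inv_in S x" using inv_eqI[OF x(1) x(1)] xx by simp
  also have "\<dots> = e * f" using inv_eqI[OF x(1) ef] x(2,3) by (simp add: mult.assoc)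
  finally show ?thesis using xx unfolding idem_def by simp
qed

lemma idems_commute:
  assumes e: "e \<in> S" "idem e" and f: "f \<in> S" "idem f"
  shows "e * f = f * e"
proof -
  have ef: "e * f \<in> S" "idem (e * f)" and fe: "f * e \<in> S" "idem (f * e)"
    using mult_mem idem_mult_idem e f by auto
  have "e * f = inv_in S (e * f)" using inv_eqI[OF ef(1) ef(1)] ef(2) unfolding idem_def by simp
  also have "\<dots> = f * e"
  proof (rule inv_eqI[OF ef(1) fe(1)])
    show "e * f * (f * e) * (e * f) = e * f" "f * e * (e * f) * (f * e) = f * e"
      using ef(2) fe(2) unfolding idem_def by (simp_all add: mult.assoc idem_mult_left e f)
  qed
  finally show ?thesis .
qed

lemma inv_idem: "e \<in> S \<Longrightarrow> idem e \<Longrightarrow> inv_in S e = e"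
  using inv_eqI unfolding idem_def by simp

lemma inv_mult:
  assumes a: "a \<in> S" and b: "b \<in> S"
  shows "inv_in S (a * b) = inv_in S b * inv_in S a"
proof (rule inv_eqI)
  have com: "(b * inv_in S b) * (inv_in S a * a) = (inv_in S a * a) * (b * inv_in S b)"
    using idems_commute mult_mem inv_mem dom_idem ran_idem a b by simp
  show "a * b \<in> S" "inv_in S b * inv_in S a \<in> S" using mult_mem inv_mem a b by auto
  have "a * b * (inv_in S b * inv_in S a) * (a * b) = a * ((b * inv_in S b) * (inv_in S a * a)) * b"
    by (simp add: mult.assoc)
  also have "\<dots> = a * b" using com mult_inv_mult mult_inv_mult_assoc a b
    by (simp add: mult.assoc)
  finally show "a * b * (inv_in S b * inv_in S a) * (a * b) = a * b" .
  have "inv_in S b * inv_in S a * (a * b) * (inv_in S b * inv_in S a)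
      = inv_in S b * ((inv_in S a * a) * (b * inv_in S b)) * inv_in S a"
    by (simp add: mult.assoc)
  also have "\<dots> = inv_in S b * inv_in S a"
    using com[symmetric] inv_mult_inv inv_mult_inv_assoc a b by (simp add: mult.assoc)
  finally show "inv_in S b * inv_in S a * (a * b) * (inv_in S b * inv_in S a)
      = inv_in S b * inv_in S a" .
qed

lemma inv_conj_idem:
  assumes s: "s \<in> S" and e: "e \<in> S" "idem e"
  shows "inv_in S s * e * s \<in> S" "idem (inv_in S s * e * s)"
proof -
  have "inv_in S (e * s) * (e * s) = inv_in S s * e * s"
    using inv_mult[OF e(1) s] inv_idem[OF e] by (simp add: mult.assoc idem_mult_left[OF e(2)])
  then show "inv_in S s * e * s \<in> S" "idem (inv_in S s * e * s)"
    using dom_idem mult_mem inv_mem s e by metis+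
qed

lemma conj_idem_of_commute:
  assumes s: "s \<in> S" and e: "idem e" and com: "e * (inv_in S s * s) = (inv_in S s * s) * e"
  shows "idem (s * e * inv_in S s)"
proof -
  have "s * e * inv_in S s * (s * e * inv_in S s) = s * (e * (inv_in S s * s)) * e * inv_in S s"
    by (simp add: mult.assoc)
  also have "\<dots> = (s * inv_in S s * s) * (e * e) * inv_in S s" using com
    by (simp add: mult.assoc)
  also have "\<dots> = s * e * inv_in S s" using e mult_inv_mult[OF s] unfolding idem_def by simp
  finally show ?thesis unfolding idem_def .
qed

lemma nat_le_iff: "nat_le S x y \<longleftrightarrow> y * (inv_in S x * x) = x"
  unfolding nat_le_def by (auto simp: mult.assoc)

lemma dom_mult_idem:
  assumes u: "u \<in> S" and e: "e \<in> S" "idem e"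
  shows "inv_in S (u * e) * (u * e) = (inv_in S u * u) * e"
proof -
  have "inv_in S (u * e) * (u * e) = e * (inv_in S u * u) * e"
    using inv_mult[OF u e(1)] inv_idem[OF e] by (simp add: mult.assoc)
  also have "\<dots> = (inv_in S u * u) * (e * e)"
    using idems_commute[OF e] dom_idem[OF u] mult_mem inv_mem u by (simp add: mult.assoc)
  finally show ?thesis using e(2) unfolding idem_def by simp
qed

lemma nat_le_mult_idem:
  assumes u: "u \<in> S" and e: "e \<in> S" "idem e"
  shows "nat_le S (u * e) u"
  unfolding nat_le_iff using dom_mult_idem[OF assms] mult_inv_mult[OF u] by (simp flip: mult.assoc)

lemma dom_le:
  assumes x: "x \<in> S" and y: "y \<in> S" and le: "nat_le S x y"
  shows "(inv_in S y * y) * (inv_in S x * x) = inv_in S x * x"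
  using dom_mult_idem[OF y dom_mem[OF x] dom_idem[OF x]] le unfolding nat_le_iff by simp

lemma nat_le_antisym:
  assumes x: "x \<in> S" and y: "y \<in> S" and xy: "nat_le S x y" and yx: "nat_le S y x"
  shows "x = y"
proof -
  have "inv_in S x * x = (inv_in S y * y) * (inv_in S x * x)" using dom_le[OF x y xy] ..
  also have "\<dots> = (inv_in S x * x) * (inv_in S y * y)"
    using idems_commute dom_mem dom_idem x y by blast
  also have "\<dots> = inv_in S y * y" using dom_le[OF y x yx] .
  finally show ?thesis using xy mult_inv_mult[OF y] unfolding nat_le_iff by (simp add: mult.assoc)
qed

lemma is_lub_in_unique:
  assumes "C \<subseteq> S" and j: "is_lub_in S C X j" and k: "is_lub_in S C X k"
  shows "j = k"
proof (rule nat_le_antisym)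
  show "j \<in> S" "k \<in> S" using assms unfolding is_lub_in_def by blast+
  show "nat_le S j k" "nat_le S k j" using j k unfolding is_lub_in_def by blast+
qed

lemma is_glb_in_unique:
  assumes "C \<subseteq> S" and m: "is_glb_in S C X m" and n: "is_glb_in S C X n"
  shows "m = n"
proof (rule nat_le_antisym)
  show "m \<in> S" "n \<in> S" using assms unfolding is_glb_in_def by blast+
  show "nat_le S m n" "nat_le S n m" using m n unfolding is_glb_in_def by blast+
qed

lemma nat_le_mult_left:
  assumes s: "s \<in> S" and a: "a \<in> S" and b: "b \<in> S" and le: "nat_le S a b"
  shows "nat_le S (s * a) (s * b)"
proof -
  have "s * a = (s * b) * (inv_in S a * a)" using le unfolding nat_le_iff by (simp add: mult.assoc)
  then show ?thesis using nat_le_mult_idem[OF mult_mem[OF s b] dom_mem[OF a] dom_idem[OF a]] by simp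
qed

lemma nat_le_mult_right:
  assumes s: "s \<in> S" and a: "a \<in> S" and b: "b \<in> S" and le: "nat_le S a b"
  shows "nat_le S (a * s) (b * s)"
proof -
  define e where "e = inv_in S a * a"
  have e: "e \<in> S" "idem e" using mult_mem inv_mem dom_idem a e_def by auto
  have "e * s = e * (s * inv_in S s) * s" using mult_inv_mult[OF s] by (simp add: mult.assoc)
  also have "\<dots> = (s * inv_in S s) * e * s"
    using idems_commute[OF e ran_mem[OF s] ran_idem[OF s]] by simp
  also have "\<dots> = s * (inv_in S s * e * s)" by (simp add: mult.assoc)
  finally have es: "e * s = s * (inv_in S s * e * s)" .
  have "a * s = (b * e) * s" using le unfolding nat_le_iff e_def by simp
  also have "\<dots> = (b * s) * (inv_in S s * e * s)" using es by (simp add: mult.assoc)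
  finally have "a * s = (b * s) * (inv_in S s * e * s)" .
  then show ?thesis using nat_le_mult_idem[OF mult_mem[OF b s] inv_conj_idem[OF s e]] by simp
qed

lemma dom_mult_left_of_le:
  assumes s: "s \<in> S" and a: "a \<in> S" and j: "j \<in> S" and le: "nat_le S a j"
  shows "inv_in S (s * a) * (s * a) = (inv_in S (s * j) * (s * j)) * (inv_in S a * a)"
proof -
  have "s * a = (s * j) * (inv_in S a * a)" using le unfolding nat_le_iff by (simp add: mult.assoc)
  then show ?thesis using dom_mult_idem[OF mult_mem[OF s j] dom_mem[OF a] dom_idem[OF a]] by simp
qed

lemma inv_of_le:
  assumes x: "x \<in> S" and y: "y \<in> S" and le: "nat_le S x y"
  shows "inv_in S x = (inv_in S x * x) * inv_in S y"
proof -
  have "inv_in S x = inv_in S (y * (inv_in S x * x))" using le unfolding nat_le_iff by simp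
  also have "\<dots> = (inv_in S x * x) * inv_in S y"
    using inv_mult[OF y dom_mem[OF x]] inv_idem[OF dom_mem[OF x] dom_idem[OF x]] by simp
  finally show ?thesis .
qed

lemma ran_mult_of_le:
  assumes x: "x \<in> S" and y: "y \<in> S" and le: "nat_le S x y"
  shows "(x * inv_in S x) * y = x"
proof -
  have "(x * inv_in S x) * y = x * ((inv_in S x * x) * inv_in S y) * y"
    by (rule arg_cong[where f = "\<lambda>t. x * t * y"]) (rule inv_of_le[OF assms])
  also have "\<dots> = x * ((inv_in S x * x) * (inv_in S y * y))" by (simp add: mult.assoc)
  also have "\<dots> = x * (inv_in S x * x)"
    using dom_le[OF assms]
      idems_commute[OF dom_mem[OF x] dom_idem[OF x] dom_mem[OF y] dom_idem[OF y]]
    by simp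
  finally show ?thesis using mult_inv_mult[OF x] by (simp add: mult.assoc)
qed

lemma ran_of_le:
  assumes x: "x \<in> S" and y: "y \<in> S" and le: "nat_le S x y"
  shows "x * inv_in S x = x * inv_in S y"
proof -
  have "x * inv_in S x = x * ((inv_in S x * x) * inv_in S y)"
    by (rule arg_cong[where f = "\<lambda>t. x * t"]) (rule inv_of_le[OF assms])
  then show ?thesis using mult_inv_mult[OF x] by (simp flip: mult.assoc)
qed

lemma ran_mult_right_of_le:
  assumes s: "s \<in> S" and a: "a \<in> S" and j: "j \<in> S" and le: "nat_le S a j"
  shows "(a * s) * inv_in S (a * s) = (a * inv_in S a) * ((j * s) * inv_in S (j * s))"
proof -
  have "(a * s) * inv_in S (a * s) = (a * s) * inv_in S (j * s)"
    using ran_of_le[OF mult_mem[OF a s] mult_mem[OF j s] nat_le_mult_right[OF s a j le]] .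
  also have "\<dots> = ((a * inv_in S a) * j) * s * inv_in S (j * s)"
    using ran_mult_of_le[OF a j le] by simp
  finally show ?thesis by (simp add: mult.assoc)
qed

lemma inv_mult_ran:
  assumes s: "s \<in> S" and a: "a \<in> S"
  shows "inv_in S s * ((s * a) * inv_in S (s * a)) = (a * inv_in S a) * inv_in S s"
proof -
  have "inv_in S s * ((s * a) * inv_in S (s * a))
      = (inv_in S s * s) * (a * inv_in S a) * inv_in S s"
    using inv_mult[OF s a] by (simp add: mult.assoc)
  also have "\<dots> = (a * inv_in S a) * (inv_in S s * s * inv_in S s)"
    using idems_commute[OF dom_mem[OF s] dom_idem[OF s] ran_mem[OF a] ran_idem[OF a]]
    by (simp add: mult.assoc)
  finally show ?thesis using inv_mult_inv[OF s] by simp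
qed

lemma dom_mult_inv:
  assumes s: "s \<in> S" and a: "a \<in> S"
  shows "(inv_in S (a * s) * (a * s)) * inv_in S s = inv_in S s * (inv_in S a * a)"
proof -
  have "(inv_in S (a * s) * (a * s)) * inv_in S s
      = inv_in S s * ((inv_in S a * a) * (s * inv_in S s))"
    using inv_mult[OF a s] by (simp add: mult.assoc)
  also have "\<dots> = (inv_in S s * s * inv_in S s) * (inv_in S a * a)"
    using idems_commute[OF dom_mem[OF a] dom_idem[OF a] ran_mem[OF s] ran_idem[OF s]]
    by (simp add: mult.assoc)
  finally show ?thesis using inv_mult_inv[OF s] by simp
qed

lemma compatible_dom_eq:
  assumes a: "a \<in> S" and c: "c \<in> S" and f: "idem (a * inv_in S c)"
  shows "a * (inv_in S c * c) = c * (inv_in S a * a)"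
proof -
  have fS: "a * inv_in S c \<in> S" using mult_mem[OF a inv_mem[OF c]] .
  have "a * inv_in S c = inv_in S (a * inv_in S c)" using inv_idem[OF fS f] by simp
  also have "\<dots> = c * inv_in S a" using inv_mult[OF a inv_mem[OF c]] inv_inv[OF c] by simp
  finally have f2: "a * inv_in S c = c * inv_in S a" .
  have "c * (inv_in S a * a) = (c * inv_in S a) * a" by (simp add: mult.assoc)
  also have "\<dots> = ((a * inv_in S c) * (c * inv_in S a)) * a" using f f2 unfolding idem_def by simp
  also have "\<dots> = a * ((inv_in S c * c) * (inv_in S a * a))" by (simp add: mult.assoc)
  also have "\<dots> = a * ((inv_in S a * a) * (inv_in S c * c))"
    using idems_commute[OF dom_mem[OF a] dom_idem[OF a] dom_mem[OF c] dom_idem[OF c]] by simp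
  also have "\<dots> = a * (inv_in S c * c)" using mult_inv_mult[OF a] by (simp flip: mult.assoc)
  finally show ?thesis by simp
qed

end

section \<open>Normalizers of Boolean algebras of idempotents\<close>

locale boolean_idempotents =
  fixes B :: "'a::ring_1 set"
  assumes idem: "b \<in> B \<Longrightarrow> b * b = b"
    and commute: "x \<in> B \<Longrightarrow> y \<in> B \<Longrightarrow> x * y = y * x"
    and one_mem: "1 \<in> B"
    and mult_mem: "x \<in> B \<Longrightarrow> y \<in> B \<Longrightarrow> x * y \<in> B"
    and compl_mem: "x \<in> B \<Longrightarrow> 1 - x \<in> B"
begin

lemma zero_mem: "0 \<in> B"
  using compl_mem[OF one_mem] by simp

lemma join_mem:
  assumes "x \<in> B" "y \<in> B"
  shows "x + y - x * y \<in> B"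
proof -
  have "x + y - x * y = 1 - (1 - x) * (1 - y)" by (simp add: algebra_simps)
  then show ?thesis using assms compl_mem mult_mem by simp
qed

lemma add_mem: "x \<in> B \<Longrightarrow> y \<in> B \<Longrightarrow> x * y = 0 \<Longrightarrow> x + y \<in> B"
  using join_mem by fastforce

lemma mult_left_idem: "b \<in> B \<Longrightarrow> b * (b * z) = b * z"
  using idem by (simp flip: mult.assoc)

lemma mult_left_commute:
  assumes "x \<in> B" "y \<in> B"
  shows "x * (y * z) = y * (x * z)"
proof -
  have "x * (y * z) = (x * y) * z" by (simp add: mult.assoc)
  also have "\<dots> = y * (x * z)" using commute[OF assms] by (simp add: mult.assoc)
  finally show ?thesis .
qed

definition normal_inverse :: "'a \<Rightarrow> 'a \<Rightarrow> bool" where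
  "normal_inverse a a' \<longleftrightarrow> a * a' * a = a \<and> a' * a * a' = a' \<and>
     (\<forall>b\<in>B. a * b * a' \<in> B \<and> a' * b * a \<in> B)"

definition normalizer :: "'a set" where
  "normalizer = {a. \<exists>a'. normal_inverse a a'}"

lemma normal_inverse_sym: "normal_inverse a a' \<Longrightarrow> normal_inverse a' a"
  unfolding normal_inverse_def by auto

lemma
  assumes "normal_inverse a a'"
  shows normal_inverse_mult_inv_mult: "a * a' * a = a"
    and normal_inverse_inv_mult_inv: "a' * a * a' = a'"
    and normal_inverse_conj: "b \<in> B \<Longrightarrow> a * b * a' \<in> B" "b \<in> B \<Longrightarrow> a' * b * a \<in> B"
  using assms unfolding normal_inverse_def by auto

lemma normal_inverse_dom_mem: "normal_inverse a a' \<Longrightarrow> a' * a \<in> B"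
  and normal_inverse_ran_mem: "normal_inverse a a' \<Longrightarrow> a * a' \<in> B"
  using normal_inverse_conj[of a a' 1] one_mem by auto

lemma normal_inverse_mult:
  assumes a: "normal_inverse a a'" and c: "normal_inverse c c'"
  shows "normal_inverse (a * c) (c' * a')"
proof -
  have com: "(c * c') * (a' * a) = (a' * a) * (c * c')"
    using commute normal_inverse_dom_mem[OF a] normal_inverse_ran_mem[OF c] by blast
  have "a * c * (c' * a') * (a * c) = a * ((c * c') * (a' * a)) * c" by (simp add: mult.assoc)
  also have "\<dots> = (a * a' * a) * (c * c' * c)" using com by (simp add: mult.assoc)
  finally have 1: "a * c * (c' * a') * (a * c) = a * c"
    using normal_inverse_mult_inv_mult[OF a] normal_inverse_mult_inv_mult[OF c] by simp
  have "c' * a' * (a * c) * (c' * a') = c' * ((a' * a) * (c * c')) * a'" by (simp add: mult.assoc)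
  also have "\<dots> = (c' * c * c') * (a' * a * a')" using com[symmetric] by (simp add: mult.assoc)
  finally have 2: "c' * a' * (a * c) * (c' * a') = c' * a'"
    using normal_inverse_inv_mult_inv[OF a] normal_inverse_inv_mult_inv[OF c] by simp
  have "a * c * b * (c' * a') \<in> B \<and> c' * a' * b * (a * c) \<in> B" if "b \<in> B" for b
    using normal_inverse_conj(1)[OF a normal_inverse_conj(1)[OF c that]]
      normal_inverse_conj(2)[OF c normal_inverse_conj(2)[OF a that]]
    by (simp add: mult.assoc)
  with 1 2 show ?thesis unfolding normal_inverse_def by blast
qed

lemma normal_inverse_self: "b \<in> B \<Longrightarrow> normal_inverse b b"
  unfolding normal_inverse_def using idem mult_mem by auto

lemma normalizer_mult_mem: "a \<in> normalizer \<Longrightarrow> c \<in> normalizer \<Longrightarrow> a * c \<in> normalizer"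
  unfolding normalizer_def using normal_inverse_mult by blast

lemma subset_normalizer: "B \<subseteq> normalizer"
  unfolding normalizer_def using normal_inverse_self by blast

lemma idem_normalizer_mem:
  assumes "x \<in> normalizer" and xx: "x * x = x"
  shows "x \<in> B"
proof -
  obtain x' where x: "normal_inverse x x'" using assms unfolding normalizer_def by blast
  define e f where "e = x' * x" and "f = x * x'"
  have eB: "e \<in> B" and fB: "f \<in> B"
    using normal_inverse_dom_mem[OF x] normal_inverse_ran_mem[OF x] by (simp_all add: e_def f_def)
  have ex: "e * x = e" using xx by (simp add: e_def mult.assoc)
  have xe: "x * e = x" and fx: "f * x = x" and xf: "x * f = f"
    using normal_inverse_mult_inv_mult[OF x] xx by (simp_all add: e_def f_def flip: mult.assoc)
  have "e = (e * f) * x" using ex fx by (simp add: mult.assoc)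
  also have "\<dots> = f * e" using ex commute[OF eB fB] by (simp add: mult.assoc)
  also have "\<dots> = x * (e * f)" using xf commute[OF eB fB] by (simp flip: mult.assoc)
  also have "\<dots> = f" using xe xf by (simp flip: mult.assoc)
  finally have "x = f" using xe xf by simp
  with fB show ?thesis by simp
qed

lemma normal_inverse_unique:
  assumes y: "normal_inverse a y" and z: "normal_inverse a z"
  shows "y = z"
proof -
  have ya: "y * a \<in> B" and za: "z * a \<in> B" and ay: "a * y \<in> B" and az: "a * z \<in> B"
    using normal_inverse_dom_mem normal_inverse_ran_mem y z by blast+
  note a_z = normal_inverse_mult_inv_mult[OF z] and a_y = normal_inverse_mult_inv_mult[OF y]
    and y_a = normal_inverse_inv_mult_inv[OF y] and z_a = normal_inverse_inv_mult_inv[OF z]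
  have "y = y * (a * z * a) * y" using a_z y_a by simp
  also have "\<dots> = (z * a) * (y * a * y)" using commute[OF ya za] by (simp add: mult.assoc)
  finally have 1: "y = z * a * y" using y_a by simp
  have "z = z * (a * y * a) * z" using a_y z_a by simp
  also have "\<dots> = (z * a * z) * (a * y)" using commute[OF ay az] by (simp add: mult.assoc)
  finally have 2: "z = z * (a * y)" using z_a by simp
  from 1 2 show ?thesis by (simp add: mult.assoc)
qed

lemma normal_inverseI:
  assumes a: "a \<in> normalizer" and t: "t \<in> normalizer"
    and ata: "a * t * a = a" and tat: "t * a * t = t"
  shows "normal_inverse a t"
proof -
  obtain a' where a': "normal_inverse a a'" using a unfolding normalizer_def by blast
  have "(a * t) * (a * t) = a * t" "(t * a) * (t * a) = t * a"
    using ata tat by (simp_all flip: mult.assoc)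
  then have at: "a * t \<in> B" and ta: "t * a \<in> B"
    using idem_normalizer_mem normalizer_mult_mem a t by blast+
  have "t = t * (a * a' * a) * t" using tat normal_inverse_mult_inv_mult[OF a'] by simp
  then have t_eq: "t = (t * a) * a' * (a * t)" by (simp add: mult.assoc)
  have "a * b * t \<in> B \<and> t * b * a \<in> B" if b: "b \<in> B" for b
  proof
    have "a * b * t = a * b * ((t * a) * a' * (a * t))"
      by (rule arg_cong[where f = "\<lambda>x. a * b * x"]) (rule t_eq)
    also have "\<dots> = (a * (b * (t * a)) * a') * (a * t)" by (simp add: mult.assoc)
    finally show "a * b * t \<in> B"
      using normal_inverse_conj(1)[OF a' mult_mem[OF b ta]] mult_mem at by simp
    have "t * b * a = ((t * a) * a' * (a * t)) * b * a"
      by (rule arg_cong[where f = "\<lambda>x. x * b * a"]) (rule t_eq)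
    also have "\<dots> = (t * a) * (a' * ((a * t) * b) * a)" by (simp add: mult.assoc)
    finally show "t * b * a \<in> B"
      using normal_inverse_conj(2)[OF a' mult_mem[OF at b]] mult_mem ta by simp
  qed
  with ata tat show ?thesis unfolding normal_inverse_def by blast
qed

lemma inverse_monoid_normalizer: "is_inverse_monoid normalizer"
  unfolding is_inverse_monoid_def
proof (intro conjI ballI)
  show "1 \<in> normalizer" using subset_normalizer one_mem by blast
  show "x * y \<in> normalizer" if "x \<in> normalizer" "y \<in> normalizer" for x y
    using normalizer_mult_mem that .
  fix s assume s: "s \<in> normalizer"
  then obtain s' where s': "normal_inverse s s'" unfolding normalizer_def by blast
  show "\<exists>!t. t \<in> normalizer \<and> s = s * t * s \<and> t = t * s * t"
  proof
    show "s' \<in> normalizer \<and> s = s * s' * s \<and> s' = s' * s * s'"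
      using normal_inverse_sym[OF s'] normal_inverse_mult_inv_mult[OF s']
        normal_inverse_inv_mult_inv[OF s']
      unfolding normalizer_def by auto
    show "t = s'" if "t \<in> normalizer \<and> s = s * t * s \<and> t = t * s * t" for t
      using normal_inverse_unique[OF normal_inverseI[OF s] s'] that by auto
  qed
qed

sublocale N: inverse_submonoid normalizer
  by unfold_locales (rule inverse_monoid_normalizer)

abbreviation ninv :: "'a \<Rightarrow> 'a" where
  "ninv \<equiv> inv_in normalizer"

lemma ninv_eq:
  assumes "normal_inverse a a'"
  shows "ninv a = a'"
proof (rule N.inv_eqI)
  show "a \<in> normalizer" "a' \<in> normalizer"
    using assms normal_inverse_sym unfolding normalizer_def by blast+
qed (use normal_inverse_mult_inv_mult normal_inverse_inv_mult_inv assms in auto)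

lemma normal_inverse_ninv:
  assumes "a \<in> normalizer"
  shows "normal_inverse a (ninv a)"
proof -
  obtain a' where "normal_inverse a a'" using assms unfolding normalizer_def by blast
  then show ?thesis using ninv_eq by simp
qed

lemma
  assumes "a \<in> normalizer" "b \<in> B"
  shows conj_mem: "a * b * ninv a \<in> B"
    and inv_conj_mem: "ninv a * b * a \<in> B"
  using normal_inverse_conj[OF normal_inverse_ninv[OF assms(1)] assms(2)] by blast+

lemma dom_mem: "a \<in> normalizer \<Longrightarrow> ninv a * a \<in> B"
  and ran_mem: "a \<in> normalizer \<Longrightarrow> a * ninv a \<in> B"
  by (rule normal_inverse_dom_mem normal_inverse_ran_mem, erule normal_inverse_ninv)+

lemma ninv_idem: "b \<in> B \<Longrightarrow> ninv b = b"
  using ninv_eq normal_inverse_self by blast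

lemma idems_normalizer: "idems normalizer = B"
  unfolding idems_def idem_def using idem_normalizer_mem subset_normalizer idem by blast

subsection \<open>Orthogonal sums\<close>

lemma ran_orthogonal_zero:
  assumes a: "a \<in> normalizer" and b: "b \<in> normalizer" and x: "x \<in> B"
    and ran0: "(a * ninv a) * (b * ninv b) = 0"
  shows "ninv a * x * b = 0"
proof -
  have "ninv a * x * b = (ninv a * a * ninv a) * x * (b * ninv b * b)"
    using N.inv_mult_inv[OF a] N.mult_inv_mult[OF b] by simp
  also have "\<dots> = ninv a * (x * ((a * ninv a) * (b * ninv b))) * b"
    using mult_left_commute[OF ran_mem[OF a] x, of "b * ninv b * b"] by (simp add: mult.assoc)
  finally show ?thesis using ran0 by simp
qed

lemma dom_orthogonal_zero:
  assumes a: "a \<in> normalizer" and b: "b \<in> normalizer" and x: "x \<in> B"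
    and dom0: "(ninv a * a) * (ninv b * b) = 0"
  shows "a * x * ninv b = 0"
proof -
  have "a * x * ninv b = (a * ninv a * a) * x * (ninv b * b * ninv b)"
    using N.mult_inv_mult[OF a] N.inv_mult_inv[OF b] by simp
  also have "\<dots> = a * (x * ((ninv a * a) * (ninv b * b))) * ninv b"
    using mult_left_commute[OF dom_mem[OF a] x, of "ninv b * b * ninv b"] by (simp add: mult.assoc)
  finally show ?thesis using dom0 by simp
qed

lemma orthogonal_cross_zero:
  assumes a: "a \<in> normalizer" and b: "b \<in> normalizer"
    and dom0: "(ninv a * a) * (ninv b * b) = 0" and ran0: "(a * ninv a) * (b * ninv b) = 0"
    and x: "x \<in> B"
  shows "ninv a * x * b = 0" "ninv b * x * a = 0" "a * x * ninv b = 0" "b * x * ninv a = 0"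
proof -
  have "(ninv b * b) * (ninv a * a) = 0" "(b * ninv b) * (a * ninv a) = 0"
    using dom0 ran0 commute dom_mem ran_mem a b by metis+
  then show "ninv a * x * b = 0" "ninv b * x * a = 0" "a * x * ninv b = 0" "b * x * ninv a = 0"
    using ran_orthogonal_zero dom_orthogonal_zero a b x dom0 ran0 by blast+
qed

lemma normal_inverse_add:
  assumes a: "a \<in> normalizer" and b: "b \<in> normalizer"
    and dom0: "(ninv a * a) * (ninv b * b) = 0" and ran0: "(a * ninv a) * (b * ninv b) = 0"
  shows "normal_inverse (a + b) (ninv a + ninv b)"
proof -
  note cross = orthogonal_cross_zero[OF assms]
  have z: "ninv a * b = 0" "ninv b * a = 0" "a * ninv b = 0" "b * ninv a = 0"
    using cross[OF one_mem] by simp_all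
  have zl: "ninv a * (b * y) = 0" "ninv b * (a * y) = 0"
    "a * (ninv b * y) = 0" "b * (ninv a * y) = 0" for y
    using z by (simp_all flip: mult.assoc)
  have "(a + b) * (ninv a + ninv b) * (a + b) = a + b"
    using N.mult_inv_mult[OF a] N.mult_inv_mult[OF b] by (simp add: algebra_simps z zl)
  moreover have "(ninv a + ninv b) * (a + b) * (ninv a + ninv b) = ninv a + ninv b"
    using N.inv_mult_inv[OF a] N.inv_mult_inv[OF b] by (simp add: algebra_simps z zl)
  moreover have "(a + b) * x * (ninv a + ninv b) \<in> B \<and> (ninv a + ninv b) * x * (a + b) \<in> B"
    if x: "x \<in> B" for x
  proof
    have "(a + b) * x * (ninv a + ninv b) = a * x * ninv a + b * x * ninv b"
      using cross[OF x] by (simp add: algebra_simps)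
    moreover have "(a * x * ninv a) * (b * x * ninv b) = 0" using zl by (simp add: mult.assoc)
    ultimately show "(a + b) * x * (ninv a + ninv b) \<in> B"
      using add_mem conj_mem a b x by simp
    have "(ninv a + ninv b) * x * (a + b) = ninv a * x * a + ninv b * x * b"
      using cross[OF x] by (simp add: algebra_simps)
    moreover have "(ninv a * x * a) * (ninv b * x * b) = 0" using zl by (simp add: mult.assoc)
    ultimately show "(ninv a + ninv b) * x * (a + b) \<in> B"
      using add_mem inv_conj_mem a b x by simp
  qed
  ultimately show ?thesis unfolding normal_inverse_def by blast
qed

lemma
  assumes a: "a \<in> normalizer" and b: "b \<in> normalizer"
    and dom0: "(ninv a * a) * (ninv b * b) = 0" and ran0: "(a * ninv a) * (b * ninv b) = 0"
  shows add_mem_normalizer: "a + b \<in> normalizer"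
    and dom_add: "ninv (a + b) * (a + b) = ninv a * a + ninv b * b"
    and ran_add: "(a + b) * ninv (a + b) = a * ninv a + b * ninv b"
proof -
  note ab = normal_inverse_add[OF assms]
  show "a + b \<in> normalizer" using ab unfolding normalizer_def by blast
  have "ninv a * b = 0" "ninv b * a = 0" "a * ninv b = 0" "b * ninv a = 0"
    using orthogonal_cross_zero[OF assms one_mem] by simp_all
  then show "ninv (a + b) * (a + b) = ninv a * a + ninv b * b"
    and "(a + b) * ninv (a + b) = a * ninv a + b * ninv b"
    using ninv_eq[OF ab] by (simp_all add: algebra_simps)
qed

subsection \<open>Joins of finite compatible families\<close>

lemma
  assumes j: "j \<in> normalizer" and p: "p \<in> B"
  shows ninv_mult_idem_mem: "ninv (j * p) = p * ninv j"
    and dom_mult_idem_mem: "ninv (j * p) * (j * p) = (ninv j * j) * p"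
    and ran_mult_idem_mem: "(j * p) * ninv (j * p) = j * p * ninv j"
proof -
  have pN: "p \<in> normalizer" using p subset_normalizer by blast
  show "ninv (j * p) = p * ninv j" using N.inv_mult[OF j pN] ninv_idem[OF p] by simp
  then show "(j * p) * ninv (j * p) = j * p * ninv j" using mult_left_idem[OF p]
    by (simp add: mult.assoc)
  show "ninv (j * p) * (j * p) = (ninv j * j) * p"
    using N.dom_mult_idem[OF j pN] idem[OF p] unfolding idem_def by blast
qed

lemma orthogonal_extension:
  assumes c: "c \<in> normalizer" and j: "j \<in> normalizer" and g: "ninv c * j \<in> B"
  defines "p \<equiv> 1 - ninv c * c"
  shows "(ninv c * c) * (ninv (j * p) * (j * p)) = 0"
    and "(c * ninv c) * ((j * p) * ninv (j * p)) = 0"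
proof -
  have pB: "p \<in> B" unfolding p_def using compl_mem dom_mem c by blast
  have dc_p: "(ninv c * c) * p = 0" unfolding p_def using idem[OF dom_mem[OF c]]
    by (simp add: algebra_simps)
  from dom_mult_idem_mem[OF j pB] show "(ninv c * c) * (ninv (j * p) * (j * p)) = 0"
    using mult_left_commute[OF dom_mem[OF c] dom_mem[OF j]] dc_p by (simp add: mult.assoc)
  \<comment> \<open>the idempotent c^-1 j equals its own inverse j^-1 c, so it is killed by p\<close>
  have "ninv c * j = ninv j * c"
    using ninv_idem[OF g] N.inv_mult[OF N.inv_mem[OF c] j] N.inv_inv[OF c] by simp
  also have "\<dots> = ninv j * c * (ninv c * c)" using N.mult_inv_mult[OF c]
    by (simp add: mult.assoc)
  finally have "(ninv c * j) * p = 0"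
    unfolding p_def using N.mult_inv_mult_assoc[OF c] by (simp add: algebra_simps)
  from ninv_mult_idem_mem[OF j pB]
  have "(c * ninv c) * ((j * p) * ninv (j * p)) = c * ((ninv c * j) * p) * (p * ninv j)"
    by (simp add: mult.assoc)
  with \<open>(ninv c * j) * p = 0\<close> show "(c * ninv c) * ((j * p) * ninv (j * p)) = 0" by simp
qed

text \<open>The annihilator conditions say that j^-1 j and j j^-1 are the joins in B of the domains and
  ranges of the members of A.\<close>

definition tight_bound :: "'a set \<Rightarrow> 'a \<Rightarrow> bool" where
  "tight_bound A j \<longleftrightarrow> j \<in> normalizer \<and> A \<subseteq> normalizer \<and> (\<forall>a\<in>A. nat_le normalizer a j) \<and>
     (\<forall>x. (\<forall>a\<in>A. x * (ninv a * a) = 0) \<longrightarrow> x * (ninv j * j) = 0) \<and>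
     (\<forall>x. (\<forall>a\<in>A. (a * ninv a) * x = 0) \<longrightarrow> (j * ninv j) * x = 0)"

lemma tight_bound_empty: "tight_bound {} 0"
  unfolding tight_bound_def using subset_normalizer zero_mem by auto

context
  fixes A :: "'a set" and j :: 'a
  assumes bound: "tight_bound A j"
begin

lemma
  shows tight_bound_mem: "j \<in> normalizer"
    and tight_bound_subset: "A \<subseteq> normalizer"
    and tight_bound_le: "a \<in> A \<Longrightarrow> nat_le normalizer a j"
    and tight_bound_dom_ann: "\<forall>a\<in>A. x * (ninv a * a) = 0 \<Longrightarrow> x * (ninv j * j) = 0"
    and tight_bound_ran_ann: "\<forall>a\<in>A. (a * ninv a) * x = 0 \<Longrightarrow> (j * ninv j) * x = 0"
  using bound unfolding tight_bound_def by auto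

private lemmas j = tight_bound_mem and A = tight_bound_subset and le = tight_bound_le
  and dom_ann = tight_bound_dom_ann and ran_ann = tight_bound_ran_ann

lemma tight_bound_is_lub: "is_lub_in normalizer normalizer A j"
proof -
  have "nat_le normalizer j u" if u: "u \<in> normalizer" and ub: "\<forall>a\<in>A. nat_le normalizer a u" for u
  proof -
    \<comment> \<open>u - j annihilates every domain of A, hence the domain of j\<close>
    have "\<forall>a\<in>A. (u - j) * (ninv a * a) = 0"
      using le ub unfolding N.nat_le_iff by (simp add: algebra_simps)
    then have "(u - j) * (ninv j * j) = 0" by (rule dom_ann)
    then show ?thesis
      using N.mult_inv_mult[OF j] unfolding N.nat_le_iff by (simp add: algebra_simps mult.assoc)
  qed
  with j le show ?thesis unfolding is_lub_in_def by blast
qed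

lemma tight_bound_mult_left:
  assumes s: "s \<in> normalizer"
  shows "tight_bound ((\<lambda>a. s * a) ` A) (s * j)"
proof -
  have "x * (ninv (s * j) * (s * j)) = 0" if x: "\<forall>a\<in>A. x * (ninv (s * a) * (s * a)) = 0" for x
  proof -
    have "(x * (ninv (s * j) * (s * j))) * (ninv a * a) = x * (ninv (s * a) * (s * a))"
      if "a \<in> A" for a
      using N.dom_mult_left_of_le[OF s subsetD[OF A that] j le[OF that]] by (simp add: mult.assoc)
    with x have "\<forall>a\<in>A. (x * (ninv (s * j) * (s * j))) * (ninv a * a) = 0" by simp
    then have "x * (ninv (s * j) * (s * j)) * (ninv j * j) = 0" by (rule dom_ann)
    then show ?thesis using N.mult_inv_mult[OF j] by (simp add: mult.assoc)
  qed
  moreover have "(s * j * ninv (s * j)) * x = 0" if x: "\<forall>a\<in>A. (s * a * ninv (s * a)) * x = 0" for x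
  proof -
    have "(a * ninv a) * (ninv s * x) = ninv s * ((s * a * ninv (s * a)) * x)" if "a \<in> A" for a
      using N.inv_mult_ran[OF s subsetD[OF A that]] by (simp flip: mult.assoc)
    with x have "\<forall>a\<in>A. (a * ninv a) * (ninv s * x) = 0" by simp
    then have "s * ((j * ninv j) * (ninv s * x)) = 0" using ran_ann by simp
    then show ?thesis using N.inv_mult[OF s j] by (simp add: mult.assoc)
  qed
  ultimately show ?thesis
    unfolding tight_bound_def using N.mult_mem s j A le N.nat_le_mult_left by auto
qed

lemma tight_bound_mult_right:
  assumes s: "s \<in> normalizer"
  shows "tight_bound ((\<lambda>a. a * s) ` A) (j * s)"
proof -
  have "x * (ninv (j * s) * (j * s)) = 0" if x: "\<forall>a\<in>A. x * (ninv (a * s) * (a * s)) = 0" for x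
  proof -
    have "(x * ninv s) * (ninv a * a) = (x * (ninv (a * s) * (a * s))) * ninv s" if "a \<in> A" for a
      using N.dom_mult_inv[OF s subsetD[OF A that]] by (simp add: mult.assoc)
    with x have "\<forall>a\<in>A. (x * ninv s) * (ninv a * a) = 0" by simp
    then have "(x * ninv s) * (ninv j * j) * s = 0" using dom_ann by simp
    then show ?thesis using N.inv_mult[OF j s] by (simp add: mult.assoc)
  qed
  moreover have "(j * s * ninv (j * s)) * x = 0" if x: "\<forall>a\<in>A. (a * s * ninv (a * s)) * x = 0" for x
  proof -
    have "(a * ninv a) * ((j * s * ninv (j * s)) * x) = (a * s * ninv (a * s)) * x" if "a \<in> A" for a
      using N.ran_mult_right_of_le[OF s subsetD[OF A that] j le[OF that]] by (simp flip: mult.assoc)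
    with x have "\<forall>a\<in>A. (a * ninv a) * ((j * s * ninv (j * s)) * x) = 0" by simp
    then have "(j * ninv j) * ((j * s * ninv (j * s)) * x) = 0" by (rule ran_ann)
    then show ?thesis using N.mult_inv_mult[OF j] by (simp flip: mult.assoc)
  qed
  ultimately show ?thesis
    unfolding tight_bound_def using N.mult_mem s j A le N.nat_le_mult_right by auto
qed

lemma compatible_inv_mult_mem:
  assumes c: "c \<in> normalizer"
    and compat: "\<And>a. a \<in> A \<Longrightarrow> idem (ninv c * a)"
  shows "ninv c * j \<in> B"
proof -
  define g where "g = ninv c * j"
  \<comment> \<open>on the domain of each a \<in> A, g agrees with the idempotent c^-1 a\<close>
  have "(g * g - g) * (ninv a * a) = 0" if aA: "a \<in> A" for a
  proof -
    have a: "a \<in> normalizer" using A aA by blast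
    have ga: "g * (ninv a * a) = ninv c * a"
      using le[OF aA] unfolding g_def N.nat_le_iff by (simp add: mult.assoc)
    have "ninv c * a \<in> B"
      using idem_normalizer_mem N.mult_mem[OF N.inv_mem[OF c] a] compat[OF aA] unfolding idem_def
        by blast
    moreover have "ninv c * a = (ninv a * a) * (ninv c * a)"
      using N.mult_inv_mult[OF a] commute[OF calculation dom_mem[OF a]] by (metis mult.assoc)
    ultimately have "g * g * (ninv a * a) = ninv c * a" using ga idem by (metis mult.assoc)
    with ga show ?thesis by (simp add: algebra_simps)
  qed
  then have "(g * g - g) * (ninv j * j) = 0" using dom_ann by blast
  moreover have "g * (ninv j * j) = g" unfolding g_def using N.mult_inv_mult[OF j]
    by (simp add: mult.assoc)
  ultimately have "g * g = g" by (simp add: algebra_simps mult.assoc)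
  then show ?thesis using idem_normalizer_mem N.mult_mem N.inv_mem c j unfolding g_def by blast
qed

lemma nat_le_insert_join:
  assumes c: "c \<in> normalizer" and compat: "\<And>a. a \<in> A \<Longrightarrow> idem (a * ninv c)"
    and "a \<in> insert c A"
  shows "nat_le normalizer a (c + j * (1 - ninv c * c))"
  unfolding N.nat_le_iff
proof (cases "a = c")
  case True
  then show "(c + j * (1 - ninv c * c)) * (ninv a * a) = a"
    using N.mult_inv_mult[OF c] idem[OF dom_mem[OF c]] by (simp add: algebra_simps mult.assoc)
next
  case False
  then have aA: "a \<in> A" and a: "a \<in> normalizer" using assms(3) A by auto
  have "(c + j * (1 - ninv c * c)) * (ninv a * a)
      = c * (ninv a * a) + j * (ninv a * a) - j * (ninv a * a) * (ninv c * c)"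
    using commute[OF dom_mem[OF c] dom_mem[OF a]] by (simp add: algebra_simps mult.assoc)
  also have "\<dots> = a"
    using N.compatible_dom_eq[OF a c] compat[OF aA] le[OF aA] unfolding N.nat_le_iff by simp
  finally show "(c + j * (1 - ninv c * c)) * (ninv a * a) = a" .
qed

lemma tight_bound_insert:
  assumes c: "c \<in> normalizer"
    and compat: "\<And>a. a \<in> A \<Longrightarrow> idem (ninv c * a) \<and> idem (a * ninv c)"
  shows "tight_bound (insert c A) (c + j * (1 - ninv c * c))"
proof -
  define p where "p = 1 - ninv c * c"
  have pB: "p \<in> B" unfolding p_def using compl_mem dom_mem c by blast
  have jp: "j * p \<in> normalizer" using N.mult_mem j pB subset_normalizer by blast
  have "ninv c * j \<in> B" using compatible_inv_mult_mem[OF c] compat by blast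
  note orth = orthogonal_extension[OF c j this, folded p_def]
  note sum = add_mem_normalizer[OF c jp orth] dom_add[OF c jp orth] ran_add[OF c jp orth]
  note dom_jp = dom_mult_idem_mem[OF j pB] and ran_jp = ran_mult_idem_mem[OF j pB]
  have "\<forall>a\<in>insert c A. nat_le normalizer a (c + j * p)"
    using nat_le_insert_join[OF c] compat unfolding p_def by blast
  moreover have "x * (ninv (c + j * p) * (c + j * p)) = 0"
    if "\<forall>a\<in>insert c A. x * (ninv a * a) = 0" for x
    using that dom_ann[of x] unfolding sum(2) dom_jp by (simp add: algebra_simps flip: mult.assoc)
  moreover have "((c + j * p) * ninv (c + j * p)) * x = 0"
    if "\<forall>a\<in>insert c A. (a * ninv a) * x = 0" for x
  proof -
    have "(j * ninv j) * x = 0" using ran_ann that by simp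
    moreover have "j * p * ninv j * x = j * p * (ninv j * ((j * ninv j) * x))"
      using N.inv_mult_inv_assoc[OF j] by (simp add: mult.assoc)
    ultimately show ?thesis using that unfolding sum(3) ran_jp by (simp add: algebra_simps)
  qed
  ultimately show ?thesis
    unfolding tight_bound_def p_def[symmetric] using sum(1) c A by blast
qed

end

lemma tight_bound_exists:
  assumes "finite A" "A \<subseteq> normalizer" "\<forall>a\<in>A. \<forall>b\<in>A. compatible normalizer a b"
  shows "\<exists>j. tight_bound A j"
  using assms
proof (induction A rule: finite_induct)
  case empty
  show ?case using tight_bound_empty by blast
next
  case (insert c F)
  then obtain j where "tight_bound F j" by blast
  moreover have "idem (ninv c * a) \<and> idem (a * ninv c)" if "a \<in> F" for a
    using insert.prems that unfolding compatible_def by blast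
  ultimately show ?case using tight_bound_insert insert.prems by blast
qed

subsection \<open>The Boolean algebra of idempotents\<close>

lemma nat_le_idem_iff: "e \<in> B \<Longrightarrow> f \<in> B \<Longrightarrow> nat_le normalizer e f \<longleftrightarrow> f * e = e"
  unfolding N.nat_le_iff using ninv_idem idem by simp

lemma join_is_lub:
  assumes e: "e \<in> B" and f: "f \<in> B"
  shows "is_lub_in normalizer B {e, f} (e + f - e * f)"
proof -
  have "(e + f - e * f) * e = e" "(e + f - e * f) * f = f"
    using idem[OF e] idem[OF f] commute[OF e f] mult_left_idem[OF f]
      by (simp_all add: algebra_simps mult.assoc)
  moreover have "u * (e + f - e * f) = e + f - e * f" if "u * e = e" "u * f = f" for u
    using that by (simp add: algebra_simps flip: mult.assoc)
  ultimately show ?thesis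
    unfolding is_lub_in_def using join_mem e f nat_le_idem_iff by auto
qed

lemma meet_is_glb:
  assumes e: "e \<in> B" and f: "f \<in> B"
  shows "is_glb_in normalizer B {e, f} (e * f)"
proof -
  have "e * (e * f) = e * f" "f * (e * f) = e * f"
    using mult_left_idem[OF e] idem[OF f] mult_left_commute[OF f e] by simp_all
  moreover have "e * f * u = u" if "e * u = u" "f * u = u" for u
    using that by (simp add: mult.assoc)
  ultimately show ?thesis
    unfolding is_glb_in_def using mult_mem e f nat_le_idem_iff by auto
qed

lemma The_lub_eq: "e \<in> B \<Longrightarrow> f \<in> B \<Longrightarrow> (THE j. is_lub_in normalizer B {e, f} j) = e + f - e * f"
  using join_is_lub N.is_lub_in_unique[OF subset_normalizer] by blast

lemma The_glb_eq: "e \<in> B \<Longrightarrow> f \<in> B \<Longrightarrow> (THE m. is_glb_in normalizer B {e, f} m) = e * f"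
  using meet_is_glb N.is_glb_in_unique[OF subset_normalizer] by blast

lemma idems_boolean_algebra_normalizer: "idems_boolean_algebra normalizer"
  unfolding idems_boolean_algebra_def Let_def idems_normalizer
proof (intro conjI ballI)
  fix e f g assume e: "e \<in> B" and f: "f \<in> B" and g: "g \<in> B"
  show "\<exists>j. is_lub_in normalizer B {e, f} j" "\<exists>m. is_glb_in normalizer B {e, f} m"
    using join_is_lub[OF e f] meet_is_glb[OF e f] by blast+
  have "e * (f + g - f * g) = e * f + e * g - e * f * (e * g)"
    using mult_left_commute[OF e f] mult_left_idem[OF e] by (simp add: algebra_simps mult.assoc)
  then show "(THE m. is_glb_in normalizer B {e, THE j. is_lub_in normalizer B {f, g} j} m) =
      (THE j. is_lub_in normalizer B
        {THE m. is_glb_in normalizer B {e, f} m, THE m. is_glb_in normalizer B {e, g} m} j)"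
    using e f g by (simp add: The_lub_eq The_glb_eq join_mem mult_mem)
next
  show "\<exists>bot\<in>B. \<exists>top\<in>B. (\<forall>e\<in>B. nat_le normalizer bot e \<and> nat_le normalizer e top) \<and>
    (\<forall>e\<in>B. \<exists>c\<in>B. (THE m. is_glb_in normalizer B {e, c} m) = bot \<and>
      (THE j. is_lub_in normalizer B {e, c} j) = top)"
  proof (rule bexI[OF _ zero_mem], rule bexI[OF _ one_mem], intro conjI ballI)
    fix e assume e: "e \<in> B"
    show "nat_le normalizer 0 e" "nat_le normalizer e 1"
      using nat_le_idem_iff zero_mem one_mem e by simp_all
    have "(THE m. is_glb_in normalizer B {e, 1 - e} m) = 0"
      "(THE j. is_lub_in normalizer B {e, 1 - e} j) = 1"
      using e compl_mem[OF e] idem[OF e] by (simp_all add: The_lub_eq The_glb_eq algebra_simps)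
    with compl_mem[OF e] show "\<exists>c\<in>B. (THE m. is_glb_in normalizer B {e, c} m) = 0 \<and>
        (THE j. is_lub_in normalizer B {e, c} j) = 1" by blast
  qed
qed

lemma finite_compatible_join:
  assumes "finite A" "A \<subseteq> normalizer" "\<forall>a\<in>A. \<forall>b\<in>A. compatible normalizer a b"
  shows "\<exists>j. is_lub_in normalizer normalizer A j"
    and "is_lub_in normalizer normalizer A k \<Longrightarrow> s \<in> normalizer \<Longrightarrow>
      is_lub_in normalizer normalizer ((\<lambda>a. s * a) ` A) (s * k) \<and>
      is_lub_in normalizer normalizer ((\<lambda>a. a * s) ` A) (k * s)"
proof -
  obtain j where j: "tight_bound A j" using tight_bound_exists[OF assms] by blast
  then show "\<exists>j. is_lub_in normalizer normalizer A j" using tight_bound_is_lub by blast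
  assume k: "is_lub_in normalizer normalizer A k" and s: "s \<in> normalizer"
  have "k = j" using N.is_lub_in_unique[OF order_refl k tight_bound_is_lub[OF j]] .
  then show "is_lub_in normalizer normalizer ((\<lambda>a. s * a) ` A) (s * k) \<and>
      is_lub_in normalizer normalizer ((\<lambda>a. a * s) ` A) (k * s)"
    using tight_bound_is_lub[OF tight_bound_mult_left[OF j s]]
      tight_bound_is_lub[OF tight_bound_mult_right[OF j s]] by simp
qed

theorem boolean_inverse_monoid_normalizer: "is_boolean_inverse_monoid normalizer"
proof -
  have "\<exists>z\<in>normalizer. \<forall>x\<in>normalizer. z * x = z \<and> x * z = z"
    by (rule bexI[of _ 0]) (use subset_normalizer zero_mem in auto)
  then show ?thesis
    unfolding is_boolean_inverse_monoid_def
    using inverse_monoid_normalizer idems_boolean_algebra_normalizer finite_compatible_join by blast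
qed

end

section \<open>The subring generated by the idempotents of an inverse submonoid\<close>

inductive_set idem_subring :: "'a::ring_1 set \<Rightarrow> 'a set" for S where
  idem: "e \<in> S \<Longrightarrow> idem e \<Longrightarrow> e \<in> idem_subring S"
| add: "x \<in> idem_subring S \<Longrightarrow> y \<in> idem_subring S \<Longrightarrow> x + y \<in> idem_subring S"
| uminus: "x \<in> idem_subring S \<Longrightarrow> - x \<in> idem_subring S"
| mult: "x \<in> idem_subring S \<Longrightarrow> y \<in> idem_subring S \<Longrightarrow> x * y \<in> idem_subring S"

definition subring_idems :: "'a::ring_1 set \<Rightarrow> 'a set" where
  "subring_idems S = {c \<in> idem_subring S. idem c}"

locale ring_inverse_submonoid = inverse_submonoid S for S :: "'a::ring_1 set"
begin

lemma idem_commute_idem_subring: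
  assumes e: "e \<in> S" "idem e" and y: "y \<in> idem_subring S"
  shows "e * y = y * e"
  using y
proof induction
  case (idem f)
  then show ?case using idems_commute e by blast
next
  case (add x y)
  then show ?case by (simp add: algebra_simps)
next
  case (uminus x)
  then show ?case by simp
next
  case (mult x y)
  then show ?case by (metis mult.assoc)
qed

lemma idem_subring_commute:
  assumes x: "x \<in> idem_subring S" and y: "y \<in> idem_subring S"
  shows "x * y = y * x"
  using x
proof induction
  case (idem f)
  then show ?case using idem_commute_idem_subring y by blast
next
  case (add x1 x2)
  then show ?case by (simp add: algebra_simps)
next
  case (uminus x)
  then show ?case by simp
next
  case (mult x1 x2)
  then show ?case by (metis mult.assoc)
qed

lemma conj_idem_subring:
  assumes s: "s \<in> S" and c: "c \<in> idem_subring S"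
  shows "s * c * inv_in S s \<in> idem_subring S"
  using c
proof induction
  case (idem e)
  have "s * e * inv_in S s \<in> S" using mult_mem inv_mem s idem by blast
  moreover have "idem (s * e * inv_in S s)"
    using conj_idem_of_commute[OF s idem(2)] idems_commute[OF idem dom_mem[OF s] dom_idem[OF s]]
      by blast
  ultimately show ?case by (rule idem_subring.idem)
next
  case (add x y)
  then show ?case by (simp add: algebra_simps idem_subring.add)
next
  case (uminus x)
  then show ?case using idem_subring.uminus by simp
next
  case (mult x y)
  \<comment> \<open>insert the idempotent s^-1 s between x and y; it commutes with x\<close>
  have "s * (x * y) * inv_in S s = s * (inv_in S s * s) * x * y * inv_in S s"
    using mult_inv_mult[OF s] by (simp flip: mult.assoc)
  also have "\<dots> = (s * x * inv_in S s) * (s * y * inv_in S s)"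
    using idem_commute_idem_subring[OF dom_mem[OF s] dom_idem[OF s] mult(1)]
      by (simp add: mult.assoc)
  finally show ?case using mult idem_subring.mult by simp
qed

lemma boolean_idempotents_subring_idems: "boolean_idempotents (subring_idems S)"
proof
  fix x y assume x: "x \<in> subring_idems S" and y: "y \<in> subring_idems S"
  then show "x * x = x" using idem_def subring_idems_def by auto
  show xy: "x * y = y * x" using idem_subring_commute x y unfolding subring_idems_def by blast
  have "x * y * (x * y) = x * (y * x) * y" by (simp add: mult.assoc)
  also have "\<dots> = x * (x * y) * y" by (simp only: xy)
  also have "\<dots> = (x * x) * (y * y)" by (simp add: mult.assoc)
  finally have "x * y * (x * y) = (x * x) * (y * y)" .
  then show "x * y \<in> subring_idems S"
    using x y idem_subring.mult unfolding subring_idems_def idem_def by auto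
next
  have one: "1 \<in> idem_subring S" by (rule idem_subring.idem[OF one_mem]) (simp add: idem_def)
  then show "1 \<in> subring_idems S" unfolding subring_idems_def idem_def by simp
  fix x assume "x \<in> subring_idems S"
  then have x: "x \<in> idem_subring S" "x * x = x" unfolding subring_idems_def idem_def by auto
  have "1 + - x \<in> idem_subring S" using idem_subring.add[OF one idem_subring.uminus[OF x(1)]] .
  moreover have "(1 - x) * (1 - x) = 1 - x" using x(2) by (simp add: algebra_simps)
  ultimately show "1 - x \<in> subring_idems S" unfolding subring_idems_def idem_def by simp
qed

lemma conj_subring_idems:
  assumes s: "s \<in> S" and b: "b \<in> subring_idems S"
  shows "s * b * inv_in S s \<in> subring_idems S"
proof -
  have b: "b \<in> idem_subring S" "idem b" using b unfolding subring_idems_def by auto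
  then show ?thesis
    using conj_idem_subring[OF s b(1)] conj_idem_of_commute[OF s b(2)]
      idem_subring_commute[OF b(1) idem_subring.idem[OF dom_mem[OF s] dom_idem[OF s]]]
    unfolding subring_idems_def by blast
qed

lemma subset_normalizer_subring_idems: "S \<subseteq> boolean_idempotents.normalizer (subring_idems S)"
proof
  interpret E: boolean_idempotents "subring_idems S" by (rule boolean_idempotents_subring_idems)
  fix s assume s: "s \<in> S"
  have "s * b * inv_in S s \<in> subring_idems S \<and> inv_in S s * b * s \<in> subring_idems S"
    if "b \<in> subring_idems S" for b
    using conj_subring_idems[OF s that] conj_subring_idems[OF inv_mem[OF s] that] inv_inv[OF s]
    by simp
  then have "E.normal_inverse s (inv_in S s)"
    unfolding E.normal_inverse_def using mult_inv_mult[OF s] inv_mult_inv[OF s] by simp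
  then show "s \<in> E.normalizer" unfolding E.normalizer_def by blast
qed

end

theorem mainTheorem9:
  fixes S :: "'a::ring_1 set"
  assumes "0 \<in> S" and "1 \<in> S" and "is_inverse_monoid S"
  shows "\<exists>T. S \<subseteq> T \<and> is_boolean_inverse_monoid T"
proof -
  \<comment> \<open>only is_inverse_monoid S is used (it contains 1 \<in> S); the zero of T comes from B\<close>
  interpret ring_inverse_submonoid S by unfold_locales (rule assms(3))
  interpret E: boolean_idempotents "subring_idems S" by (rule boolean_idempotents_subring_idems)
  show ?thesis using subset_normalizer_subring_idems E.boolean_inverse_monoid_normalizer by blast
qed

end
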